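(* Let $K$ be a number field with ring of integers $\mathcal O_K$. Then the ring $\mathrm{Int}(\mathcal O_K)=\{f\in K[x]: f(\mathcal O_K)\subseteq\mathcal O_K\}$ has no prime element.
   Context: A prime element of a domain is a non-zero non-unit $p$ such that $p\mid ab$ implies $p\mid a$ or $p\mid b$. *)

theory Defs
  imports Complex_Main "HOL-Computational_Algebra.Polynomial"
begin

(* Number fields are modelled as subfields of the complex numbers that are
   finite-dimensional as vector spaces over the rationals. *)
definition is_subfield :: "complex set \<Rightarrow> bool" where
  "is_subfield K \<longleftrightarrow> 0 \<in> K \<and> 1 \<in> K \<and>
     (\<forall>x\<in>K. \<forall>y\<in>K. x + y \<in> K \<and> x - y \<in> K \<and> x * y \<in> K) \<and>
     (\<forall>x\<in>K. x \<noteq> 0 \<longrightarrow> inverse x \<in> K)"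

definition finite_dim_over_rat :: "complex set \<Rightarrow> bool" where
  "finite_dim_over_rat K \<longleftrightarrow>
     (\<exists>B. finite B \<and> B \<subseteq> K \<and>
        (\<forall>x\<in>K. \<exists>c :: complex \<Rightarrow> rat. x = (\<Sum>b\<in>B. of_rat (c b) * b)))"

definition number_field :: "complex set \<Rightarrow> bool" where
  "number_field K \<longleftrightarrow> is_subfield K \<and> finite_dim_over_rat K"

definition ring_of_integers :: "complex set \<Rightarrow> complex set" where
  "ring_of_integers K = {x \<in> K. algebraic_int x}"

definition int_valued_polys :: "complex set \<Rightarrow> complex poly set" where
  "int_valued_polys K = {f. (\<forall>i. coeff f i \<in> K) \<and>
       (\<forall>x \<in> ring_of_integers K. poly f x \<in> ring_of_integers K)}"

definition prime_elem_in :: "'a :: comm_ring_1 set \<Rightarrow> 'a \<Rightarrow> bool" where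
  "prime_elem_in R p \<longleftrightarrow> p \<in> R \<and> p \<noteq> 0 \<and> \<not> (\<exists>q\<in>R. p * q = 1) \<and>
     (\<forall>a\<in>R. \<forall>b\<in>R. (\<exists>c\<in>R. a * b = p * c) \<longrightarrow>
        (\<exists>c\<in>R. a = p * c) \<or> (\<exists>c\<in>R. b = p * c))"

end

theory Submission
  imports Defs "Jordan_Normal_Form.Char_Poly"
begin

text \<open>
  Let p be a prime element of Int(O_K) and n = [K : Q]. Every y \<in> O_K is a root of a monic
  integer polynomial of degree n (the characteristic polynomial of multiplication by y), so modulo an
  integer m > 0 each power of y is one of m^n integer combinations of 1, y, ..., y^(n-1). Hence there
  are s and L > 0 with y^(s+L) \<equiv> y^s (mod m) for all y \<in> O_K simultaneously.

  If p is a constant c, then c is a non-unit of O_K and some integer m > 0 is a multiple of c in O_K.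
  So (x^(s+L) - x^s)/m lies in Int(O_K) and c divides x^s (x^L - 1), yet c divides neither x^s nor
  x^L - 1, which take the values 1 and -1.

  If p is not constant, the norm of p(t) is a polynomial in t of positive degree, so some integer t
  makes y = p(t) a non-unit of O_K, hence a non-unit modulo some integer m. Now p^s (p^L - 1)/m lies
  in Int(O_K); since m p^j (p^L - 1)/m does too and p divides no non-zero constant, primality cancels
  the factors p one at a time, down to (p^L - 1)/m \<in> Int(O_K). Evaluated at t, this inverts y
  modulo m.
\<close>

lemma det_uminus:
  assumes "A \<in> carrier_mat n n"
  shows "det (- A) = (- 1) ^ n * (det A :: 'a :: comm_ring_1)"
proof -
  have "- A = (- 1) \<cdot>\<^sub>m A"
    using assms by (intro eq_matI) auto
  then show ?thesis
    using assms by simp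
qed

lemma poly_eq_0_if_infinite_roots:
  fixes P :: "'a :: idom poly"
  assumes "infinite S" "\<And>x. x \<in> S \<Longrightarrow> poly P x = 0"
  shows "P = 0"
  using assms poly_roots_finite[of P] finite_subset[of S "{x. poly P x = 0}"] by blast

lemma prime_elem_in_cancel:
  fixes p :: "'a :: idom"
  assumes prime: "prime_elem_in R p" and "d \<in> R" "p * v \<in> R" "d * v \<in> R"
    and not_dvd: "\<not> (\<exists>c\<in>R. d = p * c)"
  shows "v \<in> R"
proof -
  have "d * (p * v) = p * (d * v)"
    by (simp add: mult_ac)
  then obtain c where "c \<in> R" "p * v = p * c"
    using assms unfolding prime_elem_in_def by blast
  then show ?thesis
    using prime by (simp add: prime_elem_in_def)
qed

section \<open>Algebraic integers form a ring\<close>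

definition int_span :: "'a :: comm_ring_1 set \<Rightarrow> 'a set" where
  "int_span S = {(\<Sum>s\<in>S. of_int (c s) * s) | c. True}"

lemma int_spanI: "(\<Sum>s\<in>S. of_int (c s) * s) \<in> int_span S"
  unfolding int_span_def by blast

lemma int_span_sum_closed:
  assumes "\<And>i. i \<in> I \<Longrightarrow> a i \<in> int_span S"
  shows "(\<Sum>i\<in>I. of_int (k i) * a i) \<in> int_span S"
  using assms
proof (induction I rule: infinite_finite_induct)
  case (insert i I)
  obtain c d where "a i = (\<Sum>s\<in>S. of_int (c s) * s)" "(\<Sum>i\<in>I. of_int (k i) * a i) = (\<Sum>s\<in>S. of_int (d s) * s)"
    using insert unfolding int_span_def by blast
  then have "(\<Sum>i\<in>insert i I. of_int (k i) * a i) = (\<Sum>s\<in>S. of_int (k i * c s + d s) * s)"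
    using insert(1,2) by (simp add: sum_distrib_left sum.distrib algebra_simps)
  then show ?case
    by (metis int_spanI)
qed (use int_spanI[of "\<lambda>_. 0"] in simp_all)

lemma int_span_add:
  assumes "a \<in> int_span S" "b \<in> int_span S"
  shows "a + b \<in> int_span S"
  using int_span_sum_closed[of UNIV "\<lambda>i. if i then a else b" S "\<lambda>_. 1"] assms
  by (simp add: UNIV_bool add.commute)

lemma int_span_base:
  assumes "finite S" "s \<in> S"
  shows "s \<in> int_span S"
proof -
  have delta: "(\<lambda>t. of_int (if t = s then 1 else 0) * t) = (\<lambda>t. if t = s then t else 0)"
    by auto
  have "(\<Sum>t\<in>S. of_int (if t = s then 1 else 0) * t) = s"
    unfolding delta using assms by (simp add: sum.delta)
  then show ?thesis
    by (metis int_spanI)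
qed

lemma int_span_mult_closed:
  assumes "\<And>s. s \<in> S \<Longrightarrow> w * s \<in> int_span S" and "a \<in> int_span S"
  shows "w * a \<in> int_span S"
proof -
  obtain c where "a = (\<Sum>s\<in>S. of_int (c s) * s)"
    using assms(2) unfolding int_span_def by blast
  then have "w * a = (\<Sum>s\<in>S. of_int (c s) * (w * s))"
    by (simp add: sum_distrib_left mult.left_commute)
  then show ?thesis
    using int_span_sum_closed[of S "\<lambda>s. w * s" S c] assms(1) by simp
qed

text \<open>The determinant trick: z is an eigenvalue of the integer matrix of multiplication by z on
  the generators of S.\<close>
lemma algebraic_int_if_int_span_stable:
  fixes z :: "'a :: field_char_0"
  assumes fin: "finite S" and "s0 \<in> S" "s0 \<noteq> 0"
    and stable: "\<And>s. s \<in> S \<Longrightarrow> z * s \<in> int_span S"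
  shows "algebraic_int z"
proof -
  obtain xs where xs: "distinct xs" "set xs = S"
    using finite_distinct_list[OF fin] by blast
  define n where "n = length xs"
  have "\<forall>s\<in>S. \<exists>c. z * s = (\<Sum>t\<in>S. of_int (c t) * t)"
    using stable unfolding int_span_def by blast
  then obtain c where c: "\<And>s. s \<in> S \<Longrightarrow> z * s = (\<Sum>t\<in>S. of_int (c s t) * t)"
    by metis
  define Ai :: "int mat" where "Ai = mat n n (\<lambda>(i, j). c (xs ! i) (xs ! j))"
  define A :: "'a mat" where "A = map_mat of_int Ai"
  define v :: "'a vec" where "v = vec n (\<lambda>i. xs ! i)"
  have Ai: "Ai \<in> carrier_mat n n" and A: "A \<in> carrier_mat n n"
    unfolding A_def Ai_def by simp_all
  have bij: "bij_betw (nth xs) {..<n} S"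
    using bij_betw_nth[OF xs(1) _ xs(2)[symmetric]] n_def by simp
  have "A *\<^sub>v v = z \<cdot>\<^sub>v v"
  proof (rule eq_vecI)
    fix i assume "i < dim_vec (z \<cdot>\<^sub>v v)"
    then have i: "i < n" unfolding v_def by simp
    have "(A *\<^sub>v v) $ i = (\<Sum>j<n. of_int (c (xs ! i) (xs ! j)) * xs ! j)"
      using i unfolding A_def Ai_def v_def by (simp add: scalar_prod_def atLeast0LessThan)
    also have "\<dots> = (\<Sum>t\<in>S. of_int (c (xs ! i) t) * t)"
      using sum.reindex_bij_betw[OF bij, of "\<lambda>t. of_int (c (xs ! i) t) * t"] by simp
    also have "\<dots> = z * xs ! i"
      using c[of "xs ! i"] i xs(2) n_def by auto
    finally show "(A *\<^sub>v v) $ i = (z \<cdot>\<^sub>v v) $ i"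
      using i unfolding v_def by simp
  qed (use A in \<open>auto simp: v_def\<close>)
  moreover have "v \<noteq> 0\<^sub>v n"
  proof
    obtain i where i: "i < n" "xs ! i = s0"
      using assms(2) xs(2) n_def by (metis in_set_conv_nth)
    assume "v = 0\<^sub>v n"
    then have "v $ i = 0"
      using i by simp
    then show False
      using i assms(3) unfolding v_def by simp
  qed
  ultimately have "eigenvector A v z"
    using A unfolding eigenvector_def by (simp add: v_def)
  then have "eigenvalue A z"
    unfolding eigenvalue_def by blast
  then have "poly (char_poly A) z = 0"
    using eigenvalue_root_char_poly[OF A] by simp
  moreover have "char_poly A = of_int_poly (char_poly Ai)"
    unfolding A_def by (rule of_int_hom.char_poly_hom[OF Ai])
  moreover have "lead_coeff (char_poly Ai) = 1"
    using degree_monic_char_poly[OF Ai] by simp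
  ultimately show ?thesis
    unfolding algebraic_int_altdef_ipoly by auto
qed

lemma monic_int_poly_root_power:
  fixes x :: "'a :: {comm_ring_1, ring_char_0}"
  assumes "lead_coeff P = 1" "poly (of_int_poly P) x = 0"
  shows "x ^ degree P = (\<Sum>l<degree P. of_int (- coeff P l) * x ^ l)"
proof -
  have "0 = (\<Sum>l\<le>degree P. of_int (coeff P l) * x ^ l)"
    using assms(2) by (simp add: poly_altdef degree_map_poly)
  also have "\<dots> = x ^ degree P + (\<Sum>l<degree P. of_int (coeff P l) * x ^ l)"
    using assms(1) by (simp add: lessThan_Suc_atMost[symmetric])
  finally show ?thesis
    by (simp add: sum_negf eq_neg_iff_add_eq_0 add.commute)
qed

lemma monic_int_poly_root_degree_pos:
  fixes x :: "'a :: {comm_ring_1, ring_char_0}"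
  assumes "lead_coeff P = 1" "poly (of_int_poly P) x = 0"
  shows "degree P > 0"
  using assms by (cases "degree P") (auto simp: poly_altdef degree_map_poly)

text \<open>Both x + y and x y stabilise the additive group generated by the monomials
  x^i y^j with i, j below the degrees of monic integer equations for x and y.\<close>
lemma algebraic_int_add_mult:
  fixes x y :: "'a :: field_char_0"
  assumes "algebraic_int x" "algebraic_int y"
  shows "algebraic_int (x + y)" and "algebraic_int (x * y)"
proof -
  obtain P where P: "lead_coeff P = 1" "poly (of_int_poly P) x = 0"
    using assms(1) unfolding algebraic_int_altdef_ipoly by blast
  obtain Q where Q: "lead_coeff Q = 1" "poly (of_int_poly Q) y = 0"
    using assms(2) unfolding algebraic_int_altdef_ipoly by blast
  define m where "m = degree P"
  define k where "k = degree Q"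
  define S where "S = (\<lambda>(i, j). x ^ i * y ^ j) ` ({..<m} \<times> {..<k})"
  have fin: "finite S"
    unfolding S_def by simp
  have one: "1 \<in> S"
    using monic_int_poly_root_degree_pos[OF P] monic_int_poly_root_degree_pos[OF Q]
    unfolding S_def m_def k_def by (auto intro!: image_eqI[of _ _ "(0, 0)"])
  have monomial: "x ^ i * y ^ j \<in> int_span S" if "i < m" "j < k" for i j
    using that by (intro int_span_base[OF fin]) (auto simp: S_def)
  have xm: "x ^ m = (\<Sum>l<m. of_int (- coeff P l) * x ^ l)"
    using monic_int_poly_root_power[OF P] m_def by simp
  have yk: "y ^ k = (\<Sum>l<k. of_int (- coeff Q l) * y ^ l)"
    using monic_int_poly_root_power[OF Q] k_def by simp
  have x_stable: "x * s \<in> int_span S" if "s \<in> S" for s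
  proof -
    obtain i j where ij: "i < m" "j < k" "s = x ^ i * y ^ j"
      using \<open>s \<in> S\<close> unfolding S_def by auto
    show ?thesis
    proof (cases "Suc i < m")
      case True
      then show ?thesis using monomial[of "Suc i" j] ij by (simp add: mult.assoc)
    next
      case False
      then have "Suc i = m"
        using ij by simp
      then have "x * s = x ^ m * y ^ j"
        using ij by (simp add: mult.assoc flip: power_Suc)
      also have "\<dots> = (\<Sum>l<m. of_int (- coeff P l) * (x ^ l * y ^ j))"
        unfolding xm by (simp add: sum_distrib_right mult.assoc)
      also have "\<dots> \<in> int_span S"
        by (rule int_span_sum_closed) (use monomial ij in simp)
      finally show ?thesis .
    qed
  qed
  have y_stable: "y * s \<in> int_span S" if "s \<in> S" for s
  proof -
    obtain i j where ij: "i < m" "j < k" "s = x ^ i * y ^ j"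
      using \<open>s \<in> S\<close> unfolding S_def by auto
    show ?thesis
    proof (cases "Suc j < k")
      case True
      then show ?thesis using monomial[of i "Suc j"] ij by (simp add: mult_ac)
    next
      case False
      then have "Suc j = k"
        using ij by simp
      then have "y * s = x ^ i * y ^ k"
        using ij by (simp add: mult_ac flip: power_Suc)
      also have "\<dots> = (\<Sum>l<k. of_int (- coeff Q l) * (x ^ i * y ^ l))"
        unfolding yk by (simp add: sum_distrib_left mult_ac)
      also have "\<dots> \<in> int_span S"
        by (rule int_span_sum_closed) (use monomial ij in simp)
      finally show ?thesis .
    qed
  qed
  show "algebraic_int (x + y)"
    using x_stable y_stable
    by (intro algebraic_int_if_int_span_stable[OF fin one]) (auto simp: distrib_right intro: int_span_add)
  show "algebraic_int (x * y)"
    using x_stable y_stable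
    by (intro algebraic_int_if_int_span_stable[OF fin one]) (auto simp: mult.assoc intro: int_span_mult_closed)
qed

lemma algebraic_int_diff:
  fixes x y :: "'a :: field_char_0"
  shows "algebraic_int x \<Longrightarrow> algebraic_int y \<Longrightarrow> algebraic_int (x - y)"
  using algebraic_int_add_mult(1)[of x "- y"] by auto

lemma algebraic_int_power:
  fixes x :: "'a :: field_char_0"
  shows "algebraic_int x \<Longrightarrow> algebraic_int (x ^ k)"
  by (induction k) (auto intro: algebraic_int_add_mult(2))

lemma algebraic_int_sum:
  fixes f :: "'b \<Rightarrow> 'a :: field_char_0"
  shows "(\<And>i. i \<in> I \<Longrightarrow> algebraic_int (f i)) \<Longrightarrow> algebraic_int (sum f I)"
  by (induction I rule: infinite_finite_induct) (auto intro: algebraic_int_add_mult(1))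

lemma algebraic_int_coeff_prod_linear:
  fixes as :: "'a :: field_char_0 list"
  assumes "\<forall>a\<in>set as. algebraic_int a"
  shows "algebraic_int (coeff (\<Prod>a\<leftarrow>as. [:- a, 1:]) k)"
  using assms
proof (induction as arbitrary: k)
  case Nil
  then show ?case by (cases k) auto
next
  case (Cons a as)
  have "coeff (\<Prod>a\<leftarrow>a # as. [:- a, 1:]) k =
      - a * coeff (\<Prod>a\<leftarrow>as. [:- a, 1:]) k + (case k of 0 \<Rightarrow> 0 | Suc j \<Rightarrow> coeff (\<Prod>a\<leftarrow>as. [:- a, 1:]) j)"
    by (simp add: coeff_pCons split: nat.split)
  moreover have "algebraic_int (case k of 0 \<Rightarrow> 0 | Suc j \<Rightarrow> coeff (\<Prod>a\<leftarrow>as. [:- a, 1:]) j)"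
    using Cons by (cases k) auto
  ultimately show ?case
    using Cons by (metis algebraic_int_add_mult algebraic_int_minus list.set_intros)
qed

lemma algebraic_int_of_rat_iff: "algebraic_int (of_rat r :: 'a :: field_char_0) \<longleftrightarrow> r \<in> \<int>"
proof
  assume "algebraic_int (of_rat r :: 'a)"
  then have "(of_rat r :: 'a) \<in> \<int>"
    by (intro rational_algebraic_int_is_int) auto
  then obtain m where "(of_rat r :: 'a) = of_int m"
    by (auto elim: Ints_cases)
  then have "r = of_int m"
    by (metis of_rat_eq_iff of_rat_of_int_eq)
  then show "r \<in> \<int>"
    by simp
qed (auto elim: Ints_cases)

section \<open>Number fields with a rational basis\<close>

interpretation rat_vs: vector_space "\<lambda>(r :: rat) (z :: complex). of_rat r * z"
  by unfold_locales (simp_all add: algebra_simps of_rat_add of_rat_mult)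

locale number_field_basis =
  fixes K :: "complex set" and bs :: "complex list"
  assumes number_field: "number_field K"
    and basis_subset: "set bs \<subseteq> K"
    and distinct_basis: "distinct bs"
    and independent_basis: "rat_vs.independent (set bs)"
    and spanning_basis: "K \<subseteq> rat_vs.span (set bs)"

lemma number_field_has_basis:
  assumes "number_field K"
  shows "\<exists>bs. number_field_basis K bs"
proof -
  obtain B0 where B0: "finite B0" "B0 \<subseteq> K" "\<forall>x\<in>K. \<exists>c :: complex \<Rightarrow> rat. x = (\<Sum>b\<in>B0. of_rat (c b) * b)"
    using assms unfolding number_field_def finite_dim_over_rat_def by blast
  have "K \<subseteq> rat_vs.span B0"
  proof
    fix x assume "x \<in> K"
    then obtain c where "x = (\<Sum>b\<in>B0. of_rat (c b) * b)"
      using B0 by blast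
    then show "x \<in> rat_vs.span B0"
      by (simp only:) (rule rat_vs.span_sum, intro rat_vs.span_scale rat_vs.span_base)
  qed
  moreover obtain B where B: "B \<subseteq> B0" "rat_vs.independent B" "B0 \<subseteq> rat_vs.span B"
    by (rule rat_vs.basis_exists)
  moreover have "rat_vs.span B0 \<subseteq> rat_vs.span B"
    using rat_vs.span_mono[OF B(3)] by (simp only: rat_vs.span_span)
  moreover obtain bs where "distinct bs" "set bs = B"
    using finite_distinct_list[OF finite_subset[OF B(1) B0(1)]] by blast
  ultimately have "number_field_basis K bs"
    using assms B0(2) unfolding number_field_basis_def by blast
  then show ?thesis ..
qed

context number_field_basis
begin

abbreviation OK where "OK \<equiv> ring_of_integers K"

abbreviation dimK where "dimK \<equiv> length bs"

lemma K_0: "0 \<in> K" and K_1: "1 \<in> K"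
  and K_add: "x \<in> K \<Longrightarrow> y \<in> K \<Longrightarrow> x + y \<in> K"
  and K_diff: "x \<in> K \<Longrightarrow> y \<in> K \<Longrightarrow> x - y \<in> K"
  and K_mult: "x \<in> K \<Longrightarrow> y \<in> K \<Longrightarrow> x * y \<in> K"
  and K_inverse: "x \<in> K \<Longrightarrow> inverse x \<in> K"
  using number_field unfolding number_field_def is_subfield_def by auto

lemma K_divide: "x \<in> K \<Longrightarrow> y \<in> K \<Longrightarrow> x / y \<in> K"
  by (simp add: divide_inverse K_mult K_inverse)

lemma K_power: "x \<in> K \<Longrightarrow> x ^ k \<in> K"
  by (induction k) (auto intro: K_mult K_1)

lemma K_sum: "(\<And>i. i \<in> I \<Longrightarrow> f i \<in> K) \<Longrightarrow> sum f I \<in> K"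
  by (induction I rule: infinite_finite_induct) (auto intro: K_add K_0)

lemma K_of_int: "of_int k \<in> K"
  by (induction k rule: int_induct[of _ 0]) (auto intro: K_add K_diff K_0 K_1)

lemma K_of_rat: "of_rat r \<in> K"
proof -
  obtain a b where "quotient_of r = (a, b)"
    by (cases "quotient_of r")
  then have "r = of_int a / of_int b"
    by (rule quotient_of_div)
  then have "of_rat r = (of_int a / of_int b :: complex)"
    by (simp add: of_rat_divide)
  then show ?thesis
    by (simp add: K_divide K_of_int)
qed

lemma K_poly: "(\<forall>i. coeff f i \<in> K) \<Longrightarrow> x \<in> K \<Longrightarrow> poly f x \<in> K"
  by (simp add: poly_altdef K_sum K_mult K_power)

lemma OK_iff: "x \<in> OK \<longleftrightarrow> x \<in> K \<and> algebraic_int x"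
  unfolding ring_of_integers_def by simp

lemma OK_subset_K: "x \<in> OK \<Longrightarrow> x \<in> K"
  by (simp add: OK_iff)

lemma OK_add: "x \<in> OK \<Longrightarrow> y \<in> OK \<Longrightarrow> x + y \<in> OK"
  and OK_diff: "x \<in> OK \<Longrightarrow> y \<in> OK \<Longrightarrow> x - y \<in> OK"
  and OK_mult: "x \<in> OK \<Longrightarrow> y \<in> OK \<Longrightarrow> x * y \<in> OK"
  and OK_uminus: "x \<in> OK \<Longrightarrow> - x \<in> OK"
  and OK_power: "x \<in> OK \<Longrightarrow> x ^ k \<in> OK"
  and OK_of_int: "of_int m \<in> OK"
  by (auto simp: OK_iff K_add K_diff K_mult K_power K_of_int algebraic_int_add_mult
      algebraic_int_diff algebraic_int_power intro: K_diff[OF K_0, simplified])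

lemma OK_0: "0 \<in> OK" and OK_1: "1 \<in> OK"
  using OK_of_int[of 0] OK_of_int[of 1] by simp_all

lemma OK_sum: "(\<And>i. i \<in> I \<Longrightarrow> f i \<in> OK) \<Longrightarrow> sum f I \<in> OK"
  by (simp add: OK_iff K_sum algebraic_int_sum)

lemma OK_int_poly: "x \<in> OK \<Longrightarrow> poly (of_int_poly P) x \<in> OK"
  by (simp add: poly_altdef degree_map_poly OK_sum OK_mult OK_of_int OK_power)

section \<open>The regular representation and the norm\<close>

definition coord :: "nat \<Rightarrow> complex \<Rightarrow> rat" where
  "coord i y = rat_vs.representation (set bs) y (bs ! i)"

lemma basis_in_K: "i < dimK \<Longrightarrow> bs ! i \<in> K"
  using basis_subset nth_mem by blast

lemma basis_nonzero: "i < dimK \<Longrightarrow> bs ! i \<noteq> 0"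
  using independent_basis rat_vs.dependent_zero[of "set bs"] nth_mem[of i bs] by force

lemma dimK_pos: "dimK > 0"
  using spanning_basis K_1 rat_vs.span_empty by (cases bs) auto

lemma coord_expansion:
  assumes "y \<in> K"
  shows "(\<Sum>i<dimK. of_rat (coord i y) * bs ! i) = y"
proof -
  have "bij_betw (nth bs) {..<dimK} (set bs)"
    using bij_betw_nth[OF distinct_basis] by simp
  then have "(\<Sum>i<dimK. of_rat (coord i y) * bs ! i) =
      (\<Sum>b\<in>set bs. of_rat (rat_vs.representation (set bs) y b) * b)"
    unfolding coord_def by (rule sum.reindex_bij_betw)
  also have "\<dots> = y"
    using rat_vs.sum_representation_eq[OF independent_basis _ _ order_refl] assms spanning_basis
    by blast
  finally show ?thesis .
qed

lemma coord_scale: "y \<in> K \<Longrightarrow> coord i (of_rat r * y) = r * coord i y"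
  unfolding coord_def using spanning_basis
  by (auto simp: rat_vs.representation_scale[OF independent_basis])

lemma coord_of_int_scale: "y \<in> K \<Longrightarrow> coord i (of_int m * y) = of_int m * coord i y"
  using coord_scale[of y i "of_int m"] by simp

lemma coord_sum:
  assumes "\<And>j. j \<in> J \<Longrightarrow> f j \<in> K"
  shows "coord i (sum f J) = (\<Sum>j\<in>J. coord i (f j))"
  unfolding coord_def using assms spanning_basis
  by (subst rat_vs.representation_sum[OF independent_basis]) auto

lemma coord_basis: "i < dimK \<Longrightarrow> j < dimK \<Longrightarrow> coord i (bs ! j) = (if i = j then 1 else 0)"
  unfolding coord_def
  by (simp add: rat_vs.representation_basis[OF independent_basis] nth_eq_iff_index_eq[OF distinct_basis])

lemma coord_0: "coord i 0 = 0"
  unfolding coord_def by (simp add: rat_vs.representation_zero)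

definition mult_mat :: "complex \<Rightarrow> rat mat" where
  "mult_mat y = mat dimK dimK (\<lambda>(j, i). coord i (y * bs ! j))"

lemma mult_mat_carrier [simp]: "mult_mat y \<in> carrier_mat dimK dimK"
  and dim_mult_mat [simp]: "dim_row (mult_mat y) = dimK" "dim_col (mult_mat y) = dimK"
  by (simp_all add: mult_mat_def)

lemma mult_mat_index [simp]: "j < dimK \<Longrightarrow> i < dimK \<Longrightarrow> mult_mat y $$ (j, i) = coord i (y * bs ! j)"
  by (simp add: mult_mat_def)

lemma mult_mat_1: "mult_mat 1 = 1\<^sub>m dimK"
  by (rule eq_matI) (auto simp: coord_basis)

lemma mult_mat_scale: "y \<in> K \<Longrightarrow> mult_mat (of_rat r * y) = r \<cdot>\<^sub>m mult_mat y"
  by (rule eq_matI) (auto simp: mult.assoc coord_scale K_mult basis_in_K)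

lemma mult_mat_mult:
  assumes "y \<in> K" "z \<in> K"
  shows "mult_mat y * mult_mat z = mult_mat (y * z)"
proof (rule eq_matI)
  fix j i assume "j < dim_row (mult_mat (y * z))" "i < dim_col (mult_mat (y * z))"
  then have j: "j < dimK" and i: "i < dimK" by simp_all
  have zb: "z * bs ! k \<in> K" if "k < dimK" for k
    using that by (simp add: K_mult assms(2) basis_in_K)
  have "(mult_mat y * mult_mat z) $$ (j, i) = (\<Sum>k<dimK. coord k (y * bs ! j) * coord i (z * bs ! k))"
    using i j by (simp add: scalar_prod_def atLeast0LessThan)
  also have "\<dots> = (\<Sum>k<dimK. coord i (of_rat (coord k (y * bs ! j)) * (z * bs ! k)))"
    by (intro sum.cong refl) (simp add: coord_scale zb)
  also have "\<dots> = coord i (\<Sum>k<dimK. of_rat (coord k (y * bs ! j)) * (z * bs ! k))"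
    by (rule coord_sum[symmetric]) (simp add: K_mult K_of_rat zb)
  also have "(\<Sum>k<dimK. of_rat (coord k (y * bs ! j)) * (z * bs ! k)) =
      z * (\<Sum>k<dimK. of_rat (coord k (y * bs ! j)) * bs ! k)"
    by (simp add: sum_distrib_left mult_ac)
  also have "\<dots> = y * z * bs ! j"
    using coord_expansion[of "y * bs ! j"] j by (simp add: K_mult assms(1) basis_in_K mult_ac)
  finally show "(mult_mat y * mult_mat z) $$ (j, i) = mult_mat (y * z) $$ (j, i)"
    using i j by simp
qed auto

lemma mult_mat_power:
  assumes y: "y \<in> K"
  shows "mult_mat (y ^ k) = mult_mat y ^\<^sub>m k"
proof (induction k)
  case (Suc k)
  have "mult_mat (y ^ Suc k) = mult_mat (y ^ k) * mult_mat y"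
    unfolding power_Suc2 by (rule mult_mat_mult[symmetric, OF K_power[OF y] y])
  then show ?case
    using Suc by simp
qed (simp add: mult_mat_1)

definition basis_vec :: "complex vec" where
  "basis_vec = vec dimK (nth bs)"

lemma mult_mat_eigenvector:
  assumes "y \<in> K"
  shows "eigenvector (map_mat of_rat (mult_mat y)) basis_vec y"
proof -
  have "map_mat of_rat (mult_mat y) *\<^sub>v basis_vec = y \<cdot>\<^sub>v basis_vec"
  proof (rule eq_vecI)
    fix j assume "j < dim_vec (y \<cdot>\<^sub>v basis_vec)"
    then have j: "j < dimK" by (simp add: basis_vec_def)
    have "(map_mat of_rat (mult_mat y) *\<^sub>v basis_vec) $ j = (\<Sum>i<dimK. of_rat (coord i (y * bs ! j)) * bs ! i)"
      using j by (simp add: basis_vec_def scalar_prod_def atLeast0LessThan)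
    also have "\<dots> = y * bs ! j"
      using coord_expansion j by (simp add: K_mult assms basis_in_K)
    finally show "(map_mat of_rat (mult_mat y) *\<^sub>v basis_vec) $ j = (y \<cdot>\<^sub>v basis_vec) $ j"
      using j by (simp add: basis_vec_def)
  qed (simp add: basis_vec_def)
  moreover have "basis_vec $ 0 \<noteq> 0"
    using basis_nonzero dimK_pos by (simp add: basis_vec_def)
  then have "basis_vec \<noteq> 0\<^sub>v dimK"
    using dimK_pos by auto
  ultimately show ?thesis
    unfolding eigenvector_def by (simp add: basis_vec_def)
qed

text \<open>Apply the equation of y to an eigenvector and expand in coordinates.\<close>
lemma mult_mat_eigenvalue_int_poly_root:
  assumes y: "y \<in> K" and P: "poly (of_int_poly P) y = 0"
    and ev: "eigenvalue (map_mat of_rat (mult_mat y)) lam"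
  shows "poly (of_int_poly P) lam = 0"
proof -
  obtain v where v: "eigenvector (map_mat of_rat (mult_mat y)) v lam"
    using ev unfolding eigenvalue_def by blast
  then have vc: "v \<in> carrier_vec dimK" and "v \<noteq> 0\<^sub>v dimK"
    unfolding eigenvector_def by auto
  then obtain i0 where i0: "i0 < dimK" "v $ i0 \<noteq> 0"
    by (auto simp: vec_eq_iff)
  have power: "(\<Sum>i<dimK. of_rat (coord i (y ^ l * bs ! i0)) * v $ i) = lam ^ l * v $ i0" for l
  proof -
    have "map_mat of_rat (mult_mat y) ^\<^sub>m l *\<^sub>v v = lam ^ l \<cdot>\<^sub>v v"
      by (rule eigenvector_pow[where n = dimK, OF _ v]) simp
    then have "map_mat of_rat (mult_mat (y ^ l)) *\<^sub>v v = lam ^ l \<cdot>\<^sub>v v"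
      by (simp add: mult_mat_power y of_rat_hom.mat_hom_pow[OF mult_mat_carrier])
    then have "(map_mat of_rat (mult_mat (y ^ l)) *\<^sub>v v) $ i0 = lam ^ l * v $ i0"
      using i0 vc by simp
    then show ?thesis
      using i0 vc by (simp add: scalar_prod_def atLeast0LessThan)
  qed
  have coord_poly: "coord i (poly (of_int_poly P) y * bs ! i0) =
      (\<Sum>l\<le>degree P. of_int (coeff P l) * coord i (y ^ l * bs ! i0))" for i
  proof -
    have "poly (of_int_poly P) y * bs ! i0 = (\<Sum>l\<le>degree P. of_int (coeff P l) * (y ^ l * bs ! i0))"
      by (simp add: poly_altdef degree_map_poly sum_distrib_right mult.assoc)
    then show ?thesis
      using i0 by (simp add: coord_sum coord_of_int_scale K_mult K_of_int K_power y basis_in_K)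
  qed
  have "poly (of_int_poly P) lam * v $ i0 = (\<Sum>l\<le>degree P. of_int (coeff P l) * (lam ^ l * v $ i0))"
    by (simp add: poly_altdef degree_map_poly sum_distrib_right mult.assoc)
  also have "\<dots> = (\<Sum>l\<le>degree P. of_int (coeff P l) * (\<Sum>i<dimK. of_rat (coord i (y ^ l * bs ! i0)) * v $ i))"
    unfolding power ..
  also have "\<dots> = (\<Sum>i<dimK. (\<Sum>l\<le>degree P. of_int (coeff P l) * of_rat (coord i (y ^ l * bs ! i0))) * v $ i)"
    by (simp add: sum_distrib_left sum_distrib_right mult_ac sum.swap[of _ "{..<dimK}"])
  also have "\<dots> = (\<Sum>i<dimK. of_rat (coord i (poly (of_int_poly P) y * bs ! i0)) * v $ i)"
    by (intro sum.cong refl) (simp add: coord_poly of_rat_sum of_rat_mult)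
  also have "\<dots> = 0"
    using P by (simp add: coord_0)
  finally show ?thesis
    using i0(2) by simp
qed

definition field_norm :: "complex \<Rightarrow> rat" where
  "field_norm y = det (mult_mat y)"

lemma field_norm_mult:
  assumes "y \<in> K" "z \<in> K"
  shows "field_norm (y * z) = field_norm y * field_norm z"
proof -
  have "det (mult_mat y * mult_mat z) = det (mult_mat y) * det (mult_mat z)"
    by (rule det_mult[OF mult_mat_carrier mult_mat_carrier])
  then show ?thesis
    unfolding field_norm_def mult_mat_mult[OF assms] .
qed

lemma field_norm_1: "field_norm 1 = 1"
  unfolding field_norm_def mult_mat_1 by simp

lemma field_norm_scale: "y \<in> K \<Longrightarrow> field_norm (of_rat r * y) = r ^ dimK * field_norm y"
  unfolding field_norm_def by (simp add: mult_mat_scale)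

lemma field_norm_nonzero:
  assumes "y \<in> K" "y \<noteq> 0"
  shows "field_norm y \<noteq> 0"
proof -
  have "field_norm y * field_norm (inverse y) = 1"
    using field_norm_mult[OF assms(1) K_inverse[OF assms(1)]] assms field_norm_1 by simp
  then show ?thesis
    by auto
qed

text \<open>The eigenvalues of the matrix of an algebraic integer y are roots of its monic integer
  equation, so the characteristic polynomial has algebraic integer coefficients, which are
  rational and hence integers.\<close>
lemma char_poly_mult_mat_coeff_Ints:
  assumes "y \<in> OK"
  shows "coeff (char_poly (mult_mat y)) k \<in> \<int>"
proof -
  have y: "y \<in> K"
    using assms OK_subset_K by blast
  obtain P where P: "poly (of_int_poly P) y = 0" "lead_coeff P = 1"
    using assms unfolding OK_iff algebraic_int_altdef_ipoly by blast
  let ?A = "map_mat (of_rat :: rat \<Rightarrow> complex) (mult_mat y)"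
  obtain as where as: "char_poly ?A = (\<Prod>a\<leftarrow>as. [:- a, 1:])"
    using char_poly_factorized[of ?A dimK] by auto
  have "algebraic_int a" if "a \<in> set as" for a
  proof -
    have "poly (char_poly ?A) a = 0"
      using that by (simp add: as poly_prod_list prod_list_zero_iff)
    then have "eigenvalue ?A a"
      by (simp add: eigenvalue_root_char_poly[of _ dimK])
    then have "poly (of_int_poly P) a = 0"
      by (rule mult_mat_eigenvalue_int_poly_root[OF y P(1)])
    then show ?thesis
      unfolding algebraic_int_altdef_ipoly using P(2) by blast
  qed
  then have "algebraic_int (coeff (char_poly ?A) k)"
    unfolding as by (intro algebraic_int_coeff_prod_linear) blast
  moreover have "char_poly ?A = map_poly of_rat (char_poly (mult_mat y))"
    by (rule of_rat_hom.char_poly_hom[OF mult_mat_carrier])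
  ultimately show ?thesis
    by (simp add: coeff_map_poly algebraic_int_of_rat_iff)
qed

text \<open>Meaningful for y \<in> O_K, where the characteristic polynomial has integer coefficients and
  floor merely changes their type.\<close>
definition int_char_poly :: "complex \<Rightarrow> int poly" where
  "int_char_poly y = map_poly floor (char_poly (mult_mat y))"

lemma of_int_int_char_poly:
  assumes "y \<in> OK"
  shows "map_poly of_int (int_char_poly y) = char_poly (mult_mat y)"
proof (rule poly_eqI)
  fix k
  obtain m where "coeff (char_poly (mult_mat y)) k = of_int m"
    using char_poly_mult_mat_coeff_Ints[OF assms] by (auto elim: Ints_cases)
  then show "coeff (map_poly of_int (int_char_poly y)) k = coeff (char_poly (mult_mat y)) k"
    by (simp add: int_char_poly_def coeff_map_poly)
qed

lemma int_char_poly_monic: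
  assumes "y \<in> OK"
  shows "lead_coeff (int_char_poly y) = 1" and "degree (int_char_poly y) = dimK"
proof -
  have "degree (char_poly (mult_mat y)) = dimK" "coeff (char_poly (mult_mat y)) dimK = 1"
    using degree_monic_char_poly[OF mult_mat_carrier] by auto
  moreover have "degree (map_poly (of_int :: int \<Rightarrow> rat) (int_char_poly y)) = degree (int_char_poly y)"
    by (rule of_int_hom.degree_map_poly_hom)
  ultimately show degree: "degree (int_char_poly y) = dimK"
    using of_int_int_char_poly[OF assms] by simp
  have "(of_int (coeff (int_char_poly y) dimK) :: rat) = 1"
    using \<open>coeff (char_poly (mult_mat y)) dimK = 1\<close>
    by (simp add: of_int_int_char_poly[OF assms, symmetric] coeff_map_poly)
  then show "lead_coeff (int_char_poly y) = 1"
    by (simp add: degree)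
qed

lemma int_char_poly_root:
  assumes "y \<in> OK"
  shows "poly (of_int_poly (int_char_poly y)) y = 0"
proof -
  have y: "y \<in> K"
    using assms OK_subset_K by blast
  have "of_int_poly (int_char_poly y) = map_poly of_rat (char_poly (mult_mat y))"
    by (simp add: of_int_int_char_poly[OF assms, symmetric] map_poly_map_poly o_def)
  also have "\<dots> = char_poly (map_mat (of_rat :: rat \<Rightarrow> complex) (mult_mat y))"
    by (rule of_rat_hom.char_poly_hom[OF mult_mat_carrier, symmetric])
  finally have char_poly:
    "of_int_poly (int_char_poly y) = char_poly (map_mat (of_rat :: rat \<Rightarrow> complex) (mult_mat y))" .
  have "eigenvalue (map_mat of_rat (mult_mat y)) y"
    using mult_mat_eigenvector[OF y] unfolding eigenvalue_def by blast
  then show ?thesis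
    unfolding char_poly by (simp add: eigenvalue_root_char_poly[of _ dimK])
qed

lemma int_char_poly_coeff_0:
  assumes "y \<in> OK"
  shows "of_int (coeff (int_char_poly y) 0) = (- 1) ^ dimK * field_norm y"
proof -
  have "of_int (coeff (int_char_poly y) 0) = poly (char_poly (mult_mat y)) 0"
    by (simp add: poly_0_coeff_0 of_int_int_char_poly[OF assms, symmetric] coeff_map_poly)
  also have "\<dots> = det (- char_matrix (mult_mat y) 0)"
    by (rule char_poly_matrix[OF mult_mat_carrier])
  also have "char_matrix (mult_mat y) 0 = mult_mat y"
    unfolding char_matrix_def by (intro eq_matI) auto
  finally show ?thesis
    unfolding field_norm_def by (simp add: det_uminus[OF mult_mat_carrier])
qed

lemma field_norm_Ints:
  assumes "y \<in> OK"
  shows "field_norm y \<in> \<int>"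
proof -
  have "(- 1) ^ dimK * field_norm y \<in> \<int>"
    by (simp flip: int_char_poly_coeff_0[OF assms])
  then have "(- 1) ^ dimK * ((- 1) ^ dimK * field_norm y) \<in> \<int>"
    by (rule Ints_mult[OF Ints_power[OF Ints_minus[OF Ints_1]]])
  then show ?thesis
    by (simp only: mult.assoc[symmetric] minus_one_mult_self mult_1)
qed

text \<open>The constant term a of the characteristic polynomial of c is a non-zero multiple of c in the
  ring of integers; a^2 is a positive one.\<close>
lemma OK_nonzero_dvd_int:
  assumes c: "c \<in> OK" "c \<noteq> 0"
  obtains m :: int where "m > 0" "of_int m / c \<in> OK"
proof -
  obtain a q where chi: "int_char_poly c = pCons a q"
    by (cases "int_char_poly c")
  have "of_int a = (- 1) ^ dimK * field_norm c"
    using int_char_poly_coeff_0[OF c(1)] chi by simp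
  then have "a \<noteq> 0"
    using field_norm_nonzero[OF OK_subset_K[OF c(1)] c(2)] by auto
  have "of_int_poly (pCons a q) = pCons (of_int a :: complex) (of_int_poly q)"
    by (rule poly_eqI) (simp add: coeff_map_poly coeff_pCons split: nat.split)
  then have "0 = of_int a + c * poly (of_int_poly q) c"
    using int_char_poly_root[OF c(1)] chi by simp
  then have "of_int a / c = - poly (of_int_poly q) c"
    using c(2) by (simp add: field_simps eq_neg_iff_add_eq_0 add.commute)
  then have "of_int (a * a) / c = of_int a * - poly (of_int_poly q) c"
    by (simp add: times_divide_eq_right[symmetric])
  also have "\<dots> \<in> OK"
    by (intro OK_mult OK_uminus OK_of_int OK_int_poly c(1))
  finally show ?thesis
    using \<open>a \<noteq> 0\<close> that[of "a * a"] by (auto simp: zero_less_mult_iff linorder_neq_iff)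
qed

section \<open>Powers modulo an integer\<close>

text \<open>Trivial for q = 0, where division by 0 yields 0.\<close>
definition cong_OK :: "int \<Rightarrow> complex \<Rightarrow> complex \<Rightarrow> bool" where
  "cong_OK q a b \<longleftrightarrow> (a - b) / of_int q \<in> OK"

lemma cong_OK_refl: "cong_OK q a a"
  unfolding cong_OK_def using OK_0 by simp

lemma cong_OK_sym: "cong_OK q a b \<Longrightarrow> cong_OK q b a"
  unfolding cong_OK_def using OK_uminus by (metis minus_diff_eq minus_divide_left)

lemma cong_OK_trans: "cong_OK q a b \<Longrightarrow> cong_OK q b c \<Longrightarrow> cong_OK q a c"
  unfolding cong_OK_def using OK_add by (metis add_divide_distrib diff_add_cancel add_diff_eq)

lemma cong_OK_mult: "cong_OK q a b \<Longrightarrow> c \<in> OK \<Longrightarrow> cong_OK q (c * a) (c * b)"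
  unfolding cong_OK_def using OK_mult by (metis right_diff_distrib times_divide_eq_right)

lemma cong_OK_mod_coeffs:
  assumes "y \<in> OK"
  shows "cong_OK q (\<Sum>i<n. of_int (d i) * y ^ i) (\<Sum>i<n. of_int (d i mod q) * y ^ i)"
proof (cases "q = 0")
  case False
  have "(\<Sum>i<n. of_int (d i) * y ^ i) - (\<Sum>i<n. of_int (d i mod q) * y ^ i) =
      (\<Sum>i<n. of_int (d i - d i mod q) * y ^ i)"
    by (simp add: sum_subtractf algebra_simps)
  also have "\<dots> = of_int q * (\<Sum>i<n. of_int (d i div q) * y ^ i)"
    unfolding minus_mod_eq_mult_div by (simp add: sum_distrib_left mult.assoc)
  finally have "(\<Sum>i<n. of_int (d i) * y ^ i) - (\<Sum>i<n. of_int (d i mod q) * y ^ i) =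
      of_int q * (\<Sum>i<n. of_int (d i div q) * y ^ i)" .
  moreover have "(\<Sum>i<n. of_int (d i div q) * y ^ i) \<in> OK"
    by (intro OK_sum OK_mult OK_of_int OK_power assms)
  ultimately show ?thesis
    unfolding cong_OK_def using False by simp
qed (simp add: cong_OK_refl)

text \<open>Multiplication by y maps integer combinations of 1, y, ..., y^(n-1) to such combinations,
  since y is a root of its monic integer characteristic polynomial of degree n.\<close>
lemma mult_int_combination_powers:
  assumes y: "y \<in> OK"
  obtains d where "y * (\<Sum>i<dimK. of_int (c i) * y ^ i) = (\<Sum>i<dimK. of_int (d i) * y ^ i)"
proof -
  obtain m where m: "dimK = Suc m"
    using dimK_pos by (cases dimK) auto
  define P where "P = int_char_poly y"
  have top: "y ^ dimK = (\<Sum>l<dimK. of_int (- coeff P l) * y ^ l)"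
    using monic_int_poly_root_power[OF int_char_poly_monic(1)[OF y] int_char_poly_root[OF y]]
      int_char_poly_monic(2)[OF y] unfolding P_def by simp
  have "y * (\<Sum>i<dimK. of_int (c i) * y ^ i) = (\<Sum>i<dimK. of_int (c i) * y ^ Suc i)"
    by (simp add: sum_distrib_left mult_ac)
  also have "\<dots> = (\<Sum>i<m. of_int (c i) * y ^ Suc i) + of_int (c m) * y ^ dimK"
    unfolding m by simp
  also have "(\<Sum>i<m. of_int (c i) * y ^ Suc i) = (\<Sum>i<dimK. of_int (if i = 0 then 0 else c (i - 1)) * y ^ i)"
    unfolding m sum.lessThan_Suc_shift by simp
  also have "of_int (c m) * y ^ dimK = (\<Sum>i<dimK. of_int (c m * - coeff P i) * y ^ i)"
    unfolding top by (simp add: sum_distrib_left mult_ac)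
  also have "(\<Sum>i<dimK. of_int (if i = 0 then 0 else c (i - 1)) * y ^ i) +
      (\<Sum>i<dimK. of_int (c m * - coeff P i) * y ^ i) =
      (\<Sum>i<dimK. of_int ((if i = 0 then 0 else c (i - 1)) + c m * - coeff P i) * y ^ i)"
    unfolding sum.distrib[symmetric] by (intro sum.cong refl) (simp add: algebra_simps)
  finally show ?thesis
    by (rule that)
qed

lemma power_cong_int_combination:
  assumes q: "q > 0" and y: "y \<in> OK"
  shows "\<exists>c. (\<forall>i. 0 \<le> c i \<and> c i < q) \<and> cong_OK q (y ^ k) (\<Sum>i<dimK. of_int (c i) * y ^ i)"
proof (induction k)
  case 0
  have "(\<Sum>i<dimK. of_int (if i = 0 then 1 else 0) * y ^ i) = (\<Sum>i<dimK. if i = 0 then 1 else 0 :: complex)"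
    by (intro sum.cong) auto
  also have "\<dots> = 1"
    using dimK_pos by simp
  finally have "(\<Sum>i<dimK. of_int (if i = 0 then 1 else 0) * y ^ i) = 1" .
  then have "cong_OK q (y ^ 0) (\<Sum>i<dimK. of_int (if i = 0 then 1 else 0) * y ^ i)"
    by (simp add: cong_OK_refl)
  then show ?case
    using q cong_OK_trans[OF _ cong_OK_mod_coeffs[OF y]]
    by (intro exI[of _ "\<lambda>i. (if i = 0 then 1 else 0) mod q"]) auto
next
  case (Suc k)
  then obtain c where c: "\<forall>i. 0 \<le> c i \<and> c i < q" "cong_OK q (y ^ k) (\<Sum>i<dimK. of_int (c i) * y ^ i)"
    by blast
  obtain d where d: "y * (\<Sum>i<dimK. of_int (c i) * y ^ i) = (\<Sum>i<dimK. of_int (d i) * y ^ i)"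
    using mult_int_combination_powers[OF y] .
  have "cong_OK q (y ^ Suc k) (\<Sum>i<dimK. of_int (d i) * y ^ i)"
    using cong_OK_mult[OF c(2) y] d by simp
  then show ?case
    using q cong_OK_trans[OF _ cong_OK_mod_coeffs[OF y]]
    by (intro exI[of _ "\<lambda>i. d i mod q"]) auto
qed

text \<open>Pigeonhole: there are only q^n coefficient vectors.\<close>
lemma power_cong_repeat:
  assumes q: "q > 0" and y: "y \<in> OK"
  obtains i j where "i < j" "j \<le> nat q ^ dimK" "cong_OK q (y ^ i) (y ^ j)"
proof -
  define s where "s = nat q ^ dimK"
  obtain C where C: "\<And>k. \<forall>i. 0 \<le> C k i \<and> C k i < q"
    "\<And>k. cong_OK q (y ^ k) (\<Sum>i<dimK. of_int (C k i) * y ^ i)"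
    using power_cong_int_combination[OF q y] by metis
  define f where "f k = map (C k) [0..<dimK]" for k
  define Ls where "Ls = {xs. set xs \<subseteq> {0..<q} \<and> length xs = dimK}"
  have "f ` {0..s} \<subseteq> Ls"
    unfolding Ls_def f_def using C(1) by auto
  then have "card (f ` {0..s}) \<le> s"
    using card_mono[of Ls] unfolding Ls_def s_def
    by (simp add: card_lists_length_eq finite_lists_length_eq)
  then have "\<not> inj_on f {0..s}"
    using pigeonhole[of f "{0..s}"] by simp
  then obtain a b where ab: "a \<le> s" "b \<le> s" "a \<noteq> b" "f a = f b"
    unfolding inj_on_def by auto
  have cong: "cong_OK q (y ^ a') (y ^ b')" if "f a' = f b'" for a' b'
  proof -
    have "(\<Sum>i<dimK. of_int (C a' i) * y ^ i) = (\<Sum>i<dimK. of_int (C b' i) * y ^ i)"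
      using that unfolding f_def by (intro sum.cong refl) (simp add: map_eq_conv)
    then show ?thesis
      using C(2)[of a'] C(2)[of b'] cong_OK_trans cong_OK_sym by metis
  qed
  show ?thesis
  proof (cases "a < b")
    case True
    then show ?thesis using that ab cong s_def by blast
  next
    case False
    then show ?thesis using that[of b a] ab cong s_def by auto
  qed
qed

text \<open>Since (nat q ^ n)! is a multiple of every possible period, one pair (s, L) works for all
  y simultaneously.\<close>
lemma uniform_power_period:
  assumes q: "q > 0"
  obtains s L where "L > 0" "\<And>y. y \<in> OK \<Longrightarrow> cong_OK q (y ^ (s + L)) (y ^ s)"
proof -
  define s where "s = nat q ^ dimK"
  have "cong_OK q (y ^ (s + fact s)) (y ^ s)" if y: "y \<in> OK" for y
  proof -
    obtain i j where ij: "i < j" "j \<le> s" "cong_OK q (y ^ i) (y ^ j)"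
      using power_cong_repeat[OF q y] unfolding s_def by blast
    have shift: "cong_OK q (y ^ s) (y ^ (s + t * (j - i)))" for t
    proof (induction t)
      case (Suc t)
      have "cong_OK q (y ^ (s - i + t * (j - i)) * y ^ i) (y ^ (s - i + t * (j - i)) * y ^ j)"
        by (rule cong_OK_mult[OF ij(3) OK_power[OF y]])
      moreover have "y ^ (s - i + t * (j - i)) * y ^ i = y ^ (s + t * (j - i))"
        using ij by (simp flip: power_add)
      moreover have "y ^ (s - i + t * (j - i)) * y ^ j = y ^ (s + Suc t * (j - i))"
        using ij by (simp add: add_ac flip: power_add)
      ultimately show ?case
        using Suc cong_OK_trans by auto
    qed (simp add: cong_OK_refl)
    have "j - i dvd fact s"
      using ij by (intro dvd_fact) auto
    then obtain t where "fact s = (j - i) * t"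
      by (elim dvdE)
    then show ?thesis
      using shift[of t] cong_OK_sym by (simp add: mult.commute)
  qed
  then show ?thesis
    using that[of "fact s" s] by simp
qed

section \<open>Norms of polynomial values\<close>

text \<open>Expand the entries of the matrix of h(t) as polynomials in t and take the determinant.\<close>
lemma field_norm_poly_values:
  assumes h: "\<forall>i. coeff h i \<in> K"
  obtains \<Phi> :: "rat poly" where "\<And>t. poly \<Phi> t = field_norm (poly h (of_rat t))"
proof -
  define E where "E i j = (\<Sum>l\<le>degree h. monom (coord i (coeff h l * bs ! j)) l)" for i j
  define B where "B = mat dimK dimK (\<lambda>(j, i). E i j)"
  have "poly (det B) t = field_norm (poly h (of_rat t))" for t
    unfolding field_norm_def
  proof (rule poly_det_cong[OF mult_mat_carrier])
    show "B \<in> carrier_mat dimK dimK"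
      unfolding B_def by simp
    fix j i assume ji: "j < dimK" "i < dimK"
    have "poly h (of_rat t) * bs ! j = (\<Sum>l\<le>degree h. (coeff h l * of_rat t ^ l) * bs ! j)"
      by (simp add: poly_altdef sum_distrib_right)
    also have "\<dots> = (\<Sum>l\<le>degree h. of_rat (t ^ l) * (coeff h l * bs ! j))"
      by (intro sum.cong refl) (simp add: of_rat_power mult_ac)
    finally have "poly h (of_rat t) * bs ! j = (\<Sum>l\<le>degree h. of_rat (t ^ l) * (coeff h l * bs ! j))" .
    then have "coord i (poly h (of_rat t) * bs ! j) = (\<Sum>l\<le>degree h. t ^ l * coord i (coeff h l * bs ! j))"
      using ji h by (simp add: coord_sum coord_scale K_mult K_of_rat basis_in_K)
    then show "poly (B $$ (j, i)) t = mult_mat (poly h (of_rat t)) $$ (j, i)"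
      using ji by (simp add: B_def E_def poly_sum poly_monom mult_ac)
  qed
  then show ?thesis
    using that by blast
qed

text \<open>If the norms of all values of h were 1 or -1, the norm of the reversed polynomial would
  satisfy Psi(s)^2 = s^(2 d n) for s \<noteq> 0, hence vanish at 0; but Psi(0) is the norm of the
  leading coefficient of h.\<close>
lemma field_norm_poly_values_not_all_units:
  assumes h: "\<forall>i. coeff h i \<in> K" and deg: "degree h > 0"
  obtains t where "field_norm (poly h (of_rat t)) ^ 2 \<noteq> 1"
proof (rule ccontr)
  assume "\<not> thesis"
  then have units: "field_norm (poly h (of_rat t)) ^ 2 = 1" for t
    using that by blast
  define D where "D = degree h"
  have rev_K: "\<forall>i. coeff (reflect_poly h) i \<in> K"
    using h K_0 by (simp add: coeff_reflect_poly)
  obtain \<Psi> where \<Psi>: "\<And>s. poly \<Psi> s = field_norm (poly (reflect_poly h) (of_rat s))"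
    using field_norm_poly_values[OF rev_K] by blast
  have "\<Psi> ^ 2 - monom 1 (2 * D * dimK) = 0"
  proof (rule poly_eq_0_if_infinite_roots[of "- {0}"])
    show "infinite (- {0 :: rat})"
      using infinite_UNIV_char_0[where 'a = rat] by simp
    fix s :: rat assume "s \<in> - {0}"
    then have "poly (reflect_poly h) (of_rat s) = of_rat (s ^ D) * poly h (of_rat (inverse s))"
      unfolding D_def by (simp add: poly_reflect_poly_nz of_rat_power of_rat_inverse)
    then have "poly \<Psi> s = (s ^ D) ^ dimK * field_norm (poly h (of_rat (inverse s)))"
      using \<Psi> field_norm_scale K_poly[OF h K_of_rat] by simp
    then have "poly \<Psi> s ^ 2 = s ^ (2 * D * dimK)"
      using units by (simp add: power_mult_distrib flip: power_mult) (simp add: mult_ac)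
    then show "poly (\<Psi> ^ 2 - monom 1 (2 * D * dimK)) s = 0"
      by (simp add: poly_monom)
  qed
  then have "poly \<Psi> 0 ^ 2 = 0 ^ (2 * D * dimK)"
    by (metis eq_iff_diff_eq_0 poly_0 poly_power poly_monom mult_1 poly_diff)
  then have "poly \<Psi> 0 = 0"
    using deg dimK_pos unfolding D_def by (simp add: power_0_left)
  moreover have "poly \<Psi> 0 = field_norm (lead_coeff h)"
    using \<Psi>[of 0] by (simp add: poly_0_coeff_0)
  moreover have "lead_coeff h \<noteq> 0"
    using deg by auto
  ultimately show False
    using field_norm_nonzero h by metis
qed

text \<open>Otherwise the square of the norm of h(t) would be 1 on all integers, hence identically.\<close>
lemma int_value_not_unit:
  assumes h: "\<forall>i. coeff h i \<in> K" "\<forall>x\<in>OK. poly h x \<in> OK" and deg: "degree h > 0"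
  obtains t :: int where "\<not> (\<exists>u\<in>OK. poly h (of_int t) * u = 1)"
proof (rule ccontr)
  assume "\<not> thesis"
  then have units: "\<exists>u\<in>OK. poly h (of_int t) * u = 1" for t :: int
    using that by blast
  obtain \<Phi> where \<Phi>: "\<And>t. poly \<Phi> t = field_norm (poly h (of_rat t))"
    using field_norm_poly_values[OF h(1)] by blast
  have "field_norm (poly h (of_int t)) ^ 2 = 1" for t :: int
  proof -
    obtain u where u: "u \<in> OK" "poly h (of_int t) * u = 1"
      using units by blast
    have ht: "poly h (of_int t) \<in> OK"
      using h(2) OK_of_int by blast
    have "field_norm (poly h (of_int t)) * field_norm u = 1"
      using field_norm_mult[OF OK_subset_K OK_subset_K, OF ht u(1)] u(2) field_norm_1 by simp
    moreover obtain a b :: int where "field_norm (poly h (of_int t)) = of_int a" "field_norm u = of_int b"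
      using field_norm_Ints ht u(1) by (meson Ints_cases)
    ultimately have "a * b = 1"
      by (metis of_int_eq_1_iff of_int_mult)
    then show ?thesis
      using \<open>field_norm (poly h (of_int t)) = of_int a\<close> by (auto simp: zmult_eq_1_iff)
  qed
  then have "\<Phi> ^ 2 - 1 = 0"
    using \<Phi> infinite_UNIV_char_0[where 'a = int]
    by (intro poly_eq_0_if_infinite_roots[of "range of_int"]) (auto simp: finite_image_iff inj_on_def)
  then have "field_norm (poly h (of_rat t)) ^ 2 = 1" for t
    using \<Phi> by (metis eq_iff_diff_eq_0 poly_1 poly_diff poly_power)
  then show False
    using field_norm_poly_values_not_all_units[OF h(1) deg] by blast
qed

section \<open>Prime elements of Int(O_K)\<close>

lemma half_not_in_OK: "1 / 2 \<notin> OK"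
proof
  assume "1 / 2 \<in> OK"
  then have "(1 / 2 :: rat) \<in> \<int>"
    using algebraic_int_of_rat_iff[where 'a = complex, of "1 / 2"] by (simp add: OK_iff of_rat_divide)
  then obtain k where k: "(1 / 2 :: rat) = of_int k"
    by (auto elim: Ints_cases)
  have "(of_int (2 * k) :: rat) = 1"
    by (simp flip: k)
  then have "2 * k = 1"
    by (simp only: of_int_eq_1_iff)
  then show False
    by presburger
qed

text \<open>For y \<noteq> 0 take m with m / y \<in> O_K: a solution of y u \<equiv> 1 (mod m), say y u - 1 = m w,
  would give 1 / y = u - (m / y) w.\<close>
lemma OK_nonunit_mod_int:
  assumes y: "y \<in> OK" and nonunit: "\<not> (\<exists>u\<in>OK. y * u = 1)"
  obtains m :: int where "m > 0" "\<And>u. u \<in> OK \<Longrightarrow> \<not> cong_OK m (y * u) 1"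
proof (cases "y = 0")
  case True
  have "\<not> cong_OK 2 (y * u) 1" for u
    using True half_not_in_OK OK_uminus[of "- (1 / 2)"] unfolding cong_OK_def by auto
  then show ?thesis
    using that[of 2] by simp
next
  case False
  obtain m where m: "m > 0" "of_int m / y \<in> OK"
    using OK_nonzero_dvd_int[OF y False] .
  have "\<not> cong_OK m (y * u) 1" if u: "u \<in> OK" for u
  proof
    assume "cong_OK m (y * u) 1"
    then have w: "(y * u - 1) / of_int m \<in> OK"
      unfolding cong_OK_def .
    have "y * (u - of_int m / y * ((y * u - 1) / of_int m)) = 1"
      using False m(1) by (simp add: field_simps)
    moreover have "u - of_int m / y * ((y * u - 1) / of_int m) \<in> OK"
      by (intro OK_diff OK_mult u m(2) w)
    ultimately show False
      using nonunit by blast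
  qed
  then show ?thesis
    using that m(1) by blast
qed

abbreviation Int_OK where "Int_OK \<equiv> int_valued_polys K"

lemma Int_OK_iff: "f \<in> Int_OK \<longleftrightarrow> (\<forall>i. coeff f i \<in> K) \<and> (\<forall>x\<in>OK. poly f x \<in> OK)"
  unfolding int_valued_polys_def by simp

lemma Int_OK_diff: "f \<in> Int_OK \<Longrightarrow> g \<in> Int_OK \<Longrightarrow> f - g \<in> Int_OK"
  by (simp add: Int_OK_iff K_diff OK_diff)

lemma Int_OK_mult: "f \<in> Int_OK \<Longrightarrow> g \<in> Int_OK \<Longrightarrow> f * g \<in> Int_OK"
  by (simp add: Int_OK_iff coeff_mult K_sum K_mult OK_mult)

lemma Int_OK_const: "c \<in> OK \<Longrightarrow> [:c:] \<in> Int_OK"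
  by (simp add: Int_OK_iff coeff_pCons OK_subset_K K_0 split: nat.split)

lemma Int_OK_1: "1 \<in> Int_OK"
  using Int_OK_const[OF OK_1] by (simp add: one_pCons)

lemma Int_OK_power: "f \<in> Int_OK \<Longrightarrow> f ^ k \<in> Int_OK"
  by (induction k) (auto intro: Int_OK_mult Int_OK_1)

lemma Int_OK_monom: "monom 1 k \<in> Int_OK"
  by (simp add: Int_OK_iff poly_monom OK_power K_0 K_1)

lemma Int_OK_poly: "f \<in> Int_OK \<Longrightarrow> x \<in> OK \<Longrightarrow> poly f x \<in> OK"
  by (simp add: Int_OK_iff)

lemma Int_OK_smult_divide:
  assumes "f \<in> Int_OK" and "m \<noteq> 0" and "\<And>x. x \<in> OK \<Longrightarrow> cong_OK m (poly f x) 0"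
  shows "Polynomial.smult (1 / of_int m) f \<in> Int_OK"
  using assms by (auto simp: Int_OK_iff cong_OK_def K_mult K_divide K_1 K_of_int)

lemma constant_not_dvd_unit_value:
  assumes c: "\<not> (\<exists>u\<in>OK. c * u = 1)" and g: "g \<in> Int_OK" and z: "z \<in> OK"
  shows "poly ([:c:] * g) z \<noteq> 1" and "poly ([:c:] * g) z \<noteq> - 1"
proof -
  have gz: "poly g z \<in> OK" "- poly g z \<in> OK"
    using Int_OK_poly[OF g z] OK_uminus by auto
  show "poly ([:c:] * g) z \<noteq> 1"
    using c gz(1) by auto
  show "poly ([:c:] * g) z \<noteq> - 1"
  proof
    assume "poly ([:c:] * g) z = - 1"
    then have "c * - poly g z = 1"
      by simp
    then show False
      using c gz(2) by blast
  qed
qed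

lemma no_constant_prime:
  assumes prime: "prime_elem_in Int_OK [:c:]"
  shows False
proof -
  have "[:c:] \<in> Int_OK" "[:c:] \<noteq> 0" and nonunit_R: "\<not> (\<exists>q\<in>Int_OK. [:c:] * q = 1)"
    using prime unfolding prime_elem_in_def by auto
  then have c: "c \<in> OK" "c \<noteq> 0"
    using Int_OK_poly[of "[:c:]" 0] OK_0 by auto
  have nonunit: "\<not> (\<exists>u\<in>OK. c * u = 1)"
  proof
    assume "\<exists>u\<in>OK. c * u = 1"
    then obtain u where "u \<in> OK" "c * u = 1"
      by blast
    then have "[:u:] \<in> Int_OK" "[:c:] * [:u:] = 1"
      by (simp_all add: Int_OK_const one_pCons mult.commute)
    then show False
      using nonunit_R by blast
  qed
  obtain m where m: "m > 0" "of_int m / c \<in> OK"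
    using OK_nonzero_dvd_int[OF c] .
  obtain s L where L: "L > 0" and period: "\<And>y. y \<in> OK \<Longrightarrow> cong_OK m (y ^ (s + L)) (y ^ s)"
    using uniform_power_period[OF m(1)] by blast
  define D where "D = monom (1 :: complex) (s + L) - monom 1 s"
  define F where "F = Polynomial.smult (1 / of_int m) D"
  have "F \<in> Int_OK"
    unfolding F_def D_def using m(1) period
    by (intro Int_OK_smult_divide Int_OK_diff Int_OK_monom) (simp_all add: poly_monom cong_OK_def)
  then have "[:of_int m / c:] * F \<in> Int_OK"
    by (intro Int_OK_mult Int_OK_const m(2))
  moreover have "monom 1 s * (monom 1 L - 1) = [:c:] * ([:of_int m / c:] * F)"
  proof -
    have "monom 1 s * (monom 1 L - 1) = D"
      unfolding D_def by (simp add: algebra_simps mult_monom)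
    also have "D = [:c:] * ([:of_int m / c:] * F)"
      unfolding F_def using c(2) m(1) by (simp add: smult_smult)
    finally show ?thesis .
  qed
  ultimately have "(\<exists>g\<in>Int_OK. monom 1 s = [:c:] * g) \<or> (\<exists>g\<in>Int_OK. monom 1 L - 1 = [:c:] * g)"
    using prime Int_OK_monom Int_OK_diff[OF Int_OK_monom Int_OK_1] unfolding prime_elem_in_def by blast
  moreover have "poly (monom (1 :: complex) s) 1 = 1" "poly (monom (1 :: complex) L - 1) 0 = - 1"
    using L by (simp_all add: poly_monom)
  ultimately show False
    using constant_not_dvd_unit_value[OF nonunit] OK_0 OK_1 by metis
qed

lemma no_nonconstant_prime:
  assumes prime: "prime_elem_in Int_OK p" and deg: "degree p > 0"
  shows False
proof -
  have p: "p \<in> Int_OK" "p \<noteq> 0"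
    using prime unfolding prime_elem_in_def by auto
  obtain t :: int where "\<not> (\<exists>u\<in>OK. poly p (of_int t) * u = 1)"
    using int_value_not_unit p(1) deg unfolding Int_OK_iff by blast
  moreover have y: "poly p (of_int t) \<in> OK"
    using Int_OK_poly[OF p(1) OK_of_int] .
  ultimately obtain m where m: "m > 0" and nonunit: "\<And>u. u \<in> OK \<Longrightarrow> \<not> cong_OK m (poly p (of_int t) * u) 1"
    using OK_nonunit_mod_int by blast
  obtain s L where L: "L > 0" and period: "\<And>y. y \<in> OK \<Longrightarrow> cong_OK m (y ^ (s + L)) (y ^ s)"
    using uniform_power_period[OF m] by blast
  define V where "V j = Polynomial.smult (1 / of_int m) (p ^ j * (p ^ L - 1))" for j
  have numerator: "p ^ j * (p ^ L - 1) \<in> Int_OK" for j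
    by (intro Int_OK_mult Int_OK_power Int_OK_diff Int_OK_1 p(1))
  have "V s \<in> Int_OK"
    unfolding V_def
  proof (rule Int_OK_smult_divide[OF numerator])
    fix x assume "x \<in> OK"
    then have "cong_OK m (poly p x ^ (s + L)) (poly p x ^ s)"
      using Int_OK_poly[OF p(1)] period by blast
    then show "cong_OK m (poly (p ^ s * (p ^ L - 1)) x) 0"
      by (simp add: cong_OK_def algebra_simps power_add)
  qed (use m in simp)
  have constant_not_dvd: "\<not> (\<exists>c\<in>Int_OK. [:of_int m:] = p * c)"
  proof
    assume "\<exists>c\<in>Int_OK. [:of_int m:] = p * c"
    then obtain c where c: "[:of_int m:] = p * c"
      by blast
    then have "c \<noteq> 0"
      using m by auto
    then have "degree (p * c) = degree p + degree c"
      using p(2) by (simp add: degree_mult_eq)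
    moreover have "degree (p * c) = 0"
      by (simp flip: c)
    ultimately show False
      using deg by simp
  qed
  have "V (s - k) \<in> Int_OK" for k
  proof (induction k)
    case (Suc k)
    show ?case
    proof (cases "k < s")
      case True
      then have "s - k = Suc (s - Suc k)"
        by simp
      then have "p * V (s - Suc k) = V (s - k)"
        unfolding V_def by (simp add: mult_ac)
      then have "p * V (s - Suc k) \<in> Int_OK"
        using Suc.IH by simp
      moreover have "[:of_int m:] * V (s - Suc k) = p ^ (s - Suc k) * (p ^ L - 1)"
        using m by (simp add: V_def)
      then have "[:of_int m:] * V (s - Suc k) \<in> Int_OK"
        using numerator by simp
      ultimately show ?thesis
        by (rule prime_elem_in_cancel[OF prime Int_OK_const[OF OK_of_int] _ _ constant_not_dvd])
    qed (use Suc in simp)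
  qed (simp add: \<open>V s \<in> Int_OK\<close>)
  from this[of s] have "poly (V 0) (of_int t) \<in> OK"
    using Int_OK_poly OK_of_int by simp
  then have "cong_OK m (poly p (of_int t) * poly p (of_int t) ^ (L - 1)) 1"
    using L by (simp add: V_def cong_OK_def flip: power_Suc)
  then show False
    using nonunit OK_power[OF y] by blast
qed

end

theorem mainTheorem3:
  fixes K :: "complex set"
  assumes "number_field K"
  shows "\<not> (\<exists>p. prime_elem_in (int_valued_polys K) p)"
proof
  assume "\<exists>p. prime_elem_in (int_valued_polys K) p"
  then obtain p where prime: "prime_elem_in (int_valued_polys K) p"
    by blast
  obtain bs where "number_field_basis K bs"
    using number_field_has_basis[OF assms] by blast
  then interpret number_field_basis K bs .
  show False
  proof (cases "degree p = 0")
    case True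
    then obtain c where "p = [:c:]"
      by (rule degree_eq_zeroE)
    then show False
      using no_constant_prime prime by blast
  next
    case False
    then show False
      using no_nonconstant_prime prime by blast
  qed
qed

end
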